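(* Let $G$ be a finite simple $2$-connected graph with at least $4$ vertices and $\delta_2(G)\geqslant 4$. Then $G$ contains a chorded cycle.
   Context: $\delta_2(G)$ is the minimum of $|N_G(u)\cup N_G(v)|$ over all pairs of distinct nonadjacent vertices $u,v$ of $G$ (i.e. over independent sets of size 2). A chorded cycle is a cycle together with an edge of the graph, not on the cycle, joining two vertices of the cycle. *)

theory Defs
  imports Main
begin

definition simple_graph :: "'a set \<Rightarrow> ('a \<Rightarrow> 'a \<Rightarrow> bool) \<Rightarrow> bool" where
  "simple_graph V E \<longleftrightarrow> finite V \<and> (\<forall>u v. E u v \<longrightarrow> E v u) \<and> (\<forall>v. \<not> E v v)
     \<and> (\<forall>u v. E u v \<longrightarrow> u \<in> V \<and> v \<in> V)"

definition nbhd :: "'a set \<Rightarrow> ('a \<Rightarrow> 'a \<Rightarrow> bool) \<Rightarrow> 'a \<Rightarrow> 'a set" where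
  "nbhd V E v = {u \<in> V. E v u}"

fun is_walk :: "'a set \<Rightarrow> ('a \<Rightarrow> 'a \<Rightarrow> bool) \<Rightarrow> 'a list \<Rightarrow> bool" where
  "is_walk V E [] = False"
| "is_walk V E [v] = (v \<in> V)"
| "is_walk V E (u # v # vs) = (u \<in> V \<and> E u v \<and> is_walk V E (v # vs))"

definition connected_on :: "'a set \<Rightarrow> ('a \<Rightarrow> 'a \<Rightarrow> bool) \<Rightarrow> bool" where
  "connected_on S E \<longleftrightarrow> S \<noteq> {} \<and>
     (\<forall>u\<in>S. \<forall>v\<in>S. \<exists>p. is_walk S E p \<and> hd p = u \<and> last p = v)"

definition two_connected :: "'a set \<Rightarrow> ('a \<Rightarrow> 'a \<Rightarrow> bool) \<Rightarrow> bool" where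
  "two_connected V E \<longleftrightarrow> card V \<ge> 3 \<and> connected_on V E \<and>
     (\<forall>x\<in>V. connected_on (V - {x}) E)"

text \<open>delta_2(G) >= k: every pair of distinct nonadjacent vertices has
  |N(u) \<union> N(v)| >= k (vacuous if there is no such pair).\<close>
definition delta2_ge :: "'a set \<Rightarrow> ('a \<Rightarrow> 'a \<Rightarrow> bool) \<Rightarrow> nat \<Rightarrow> bool" where
  "delta2_ge V E k \<longleftrightarrow> (\<forall>u\<in>V. \<forall>v\<in>V. u \<noteq> v \<and> \<not> E u v \<longrightarrow>
     card (nbhd V E u \<union> nbhd V E v) \<ge> k)"

definition is_cycle :: "'a set \<Rightarrow> ('a \<Rightarrow> 'a \<Rightarrow> bool) \<Rightarrow> 'a list \<Rightarrow> bool" where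
  "is_cycle V E c \<longleftrightarrow> length c \<ge> 3 \<and> distinct c \<and> set c \<subseteq> V \<and>
     (\<forall>i < length c. E (c ! i) (c ! ((i + 1) mod length c)))"

definition has_chorded_cycle :: "'a set \<Rightarrow> ('a \<Rightarrow> 'a \<Rightarrow> bool) \<Rightarrow> bool" where
  "has_chorded_cycle V E \<longleftrightarrow> (\<exists>c i j. is_cycle V E c \<and> i < length c \<and> j < length c \<and>
     E (c ! i) (c ! j) \<and> j \<noteq> (i + 1) mod length c \<and> i \<noteq> (j + 1) mod length c)"

end

theory Submission
  imports Defs
begin

text \<open>Suppose G has no chorded cycle and let p0 p1 ... pk be a longest path. All
  neighbours of p0 lie on the path, and two of them beyond p1 would close a cycle through p0
  with a chord; so p0 has at most one neighbour pm besides p1, and 2-connectivity forces it to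
  exist. Rotating the path at the edge p0 pm gives a longest path starting at p(m-1), so
  p(m-1) is adjacent only to p(m-2) and pm. If m = 2, the vertex p2 separates {p0, p1} from
  the rest of G; if m \<ge> 3, the nonadjacent vertices p0 and p(m-1) have at most three
  neighbours altogether, contradicting \<delta>2(G) \<ge> 4.\<close>

lemma is_walk_nth_edge: "is_walk V E p \<Longrightarrow> Suc i < length p \<Longrightarrow> E (p ! i) (p ! Suc i)"
proof (induction V E p arbitrary: i rule: is_walk.induct)
  case (3 V E u v vs)
  then show ?case by (cases i) auto
qed auto

lemma is_walk_set: "is_walk V E p \<Longrightarrow> set p \<subseteq> V"
  by (induction V E p rule: is_walk.induct) auto

lemma is_walk_append:
  assumes "xs \<noteq> []" "ys \<noteq> []"
  shows "is_walk V E (xs @ ys) \<longleftrightarrow> is_walk V E xs \<and> is_walk V E ys \<and> E (last xs) (hd ys)"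
  using assms
proof (induction xs)
  case (Cons x xs)
  then show ?case by (cases xs; cases ys) auto
qed simp

lemma is_walk_rev: "\<forall>u v. E u v \<longrightarrow> E v u \<Longrightarrow> is_walk V E p \<Longrightarrow> is_walk V E (rev p)"
proof (induction V E p rule: is_walk.induct)
  case (3 V E u v vs)
  then have "is_walk V E (rev (v # vs) @ [u])"
    by (subst is_walk_append) auto
  then show ?case by simp
qed auto

lemma is_walk_exits_set:
  "is_walk W E w \<Longrightarrow> hd w \<in> S \<Longrightarrow> last w \<notin> S \<Longrightarrow> \<exists>u\<in>S. \<exists>v\<in>W - S. E u v"
proof (induction W E w rule: is_walk.induct)
  case (3 W E u v vs)
  then show ?case using is_walk_set[of W E "v # vs"] by (cases "v \<in> S") auto
qed auto

definition is_path :: "'a set \<Rightarrow> ('a \<Rightarrow> 'a \<Rightarrow> bool) \<Rightarrow> 'a list \<Rightarrow> bool" where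
  "is_path V E p \<longleftrightarrow> is_walk V E p \<and> distinct p"

definition longest_path :: "'a set \<Rightarrow> ('a \<Rightarrow> 'a \<Rightarrow> bool) \<Rightarrow> 'a list \<Rightarrow> bool" where
  "longest_path V E p \<longleftrightarrow> is_path V E p \<and> (\<forall>q. is_path V E q \<longrightarrow> length q \<le> length p)"

lemma is_path_nth_mem: "is_path V E p \<Longrightarrow> i < length p \<Longrightarrow> p ! i \<in> V"
  using is_walk_set[of V E p] nth_mem[of i p] unfolding is_path_def by blast

lemma is_path_nth_eq_iff:
  "is_path V E p \<Longrightarrow> i < length p \<Longrightarrow> j < length p \<Longrightarrow> p ! i = p ! j \<longleftrightarrow> i = j"
  unfolding is_path_def by (simp add: nth_eq_iff_index_eq)

lemma card_ge_4_ex_outside: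
  assumes "4 \<le> card V"
  obtains t where "t \<in> V" "t \<notin> {a, b, c}"
proof -
  have "card {a, b, c} < card V"
    using assms by (simp add: card_insert_if)
  then have "\<not> V \<subseteq> {a, b, c}"
    by (meson card_mono finite.emptyI finite_insert leD)
  then show thesis using that by blast
qed

text \<open>If all neighbours of u and v lay in {u, v, x}, then x would separate
  {u, v} - {x} from a fourth vertex.\<close>
lemma two_connected_nbhds_not_subset:
  assumes "two_connected V E" "4 \<le> card V" "x \<in> V" "v \<in> V" "v \<noteq> x"
  shows "\<not> nbhd V E u \<union> nbhd V E v \<subseteq> {u, v, x}"
proof
  assume nbhds: "nbhd V E u \<union> nbhd V E v \<subseteq> {u, v, x}"
  obtain t where t: "t \<in> V" "t \<notin> {u, v, x}"
    using card_ge_4_ex_outside[OF assms(2)] by blast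
  have "connected_on (V - {x}) E"
    using assms(1,3) unfolding two_connected_def by blast
  then obtain w where w: "is_walk (V - {x}) E w" "hd w = v" "last w = t"
    using assms(4,5) t unfolding connected_on_def by blast
  then obtain a b where "a \<in> {u, v} - {x}" "b \<in> (V - {x}) - ({u, v} - {x})" "E a b"
    using is_walk_exits_set[of "V - {x}" E w "{u, v} - {x}"] assms(5) t by auto
  then show False
    using nbhds unfolding nbhd_def by auto
qed

lemma delta2_ge_le_card:
  assumes "delta2_ge V E k" "u \<in> V" "v \<in> V" "u \<noteq> v" "\<not> E u v"
    and "finite A" "nbhd V E u \<union> nbhd V E v \<subseteq> A"
  shows "k \<le> card A"
  using assms card_mono[OF assms(6,7)] unfolding delta2_ge_def by (meson order.trans)

lemma has_chorded_cycle_if_path_start_nbrs: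
  assumes sym: "\<forall>u v. E u v \<longrightarrow> E v u" and p: "is_path V E p"
    and ei: "E (p ! 0) (p ! i)" and ej: "E (p ! 0) (p ! j)"
    and ij: "1 < i" "i < j" "j < length p"
  shows "has_chorded_cycle V E"
proof -
  define c where "c = take (Suc j) p"
  have walk: "is_walk V E p" and "distinct p"
    using p unfolding is_path_def by auto
  have lc: "length c = Suc j"
    using ij c_def by simp
  have "is_cycle V E c"
    unfolding is_cycle_def
  proof (intro conjI allI impI)
    show "3 \<le> length c" "distinct c"
      using lc ij c_def \<open>distinct p\<close> by simp_all
    show "set c \<subseteq> V"
      using is_walk_set[OF walk] set_take_subset c_def by fastforce
    fix l assume "l < length c"
    then consider "l < j" | "l = j"
      using lc by linarith
    then show "E (c ! l) (c ! ((l + 1) mod length c))"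
    proof cases
      case 1
      then show ?thesis using is_walk_nth_edge[OF walk, of l] ij lc c_def by simp
    next
      case 2
      then show ?thesis using sym ej lc c_def by simp
    qed
  qed
  moreover have "E (c ! 0) (c ! i)"
    using ei c_def ij by simp
  moreover have "0 < length c" "i < length c"
    "i \<noteq> (0 + 1) mod length c" "0 \<noteq> (i + 1) mod length c"
    using lc ij by simp_all
  ultimately show ?thesis
    unfolding has_chorded_cycle_def by blast
qed

lemma longest_path_exists:
  assumes "finite V" "is_path V E q"
  obtains p where "longest_path V E p" "length q \<le> length p"
proof -
  have "length p < Suc (card V)" if "is_path V E p" for p
  proof -
    have "set p \<subseteq> V" "distinct p"
      using that is_walk_set[of V E p] unfolding is_path_def by auto
    then have "card (set p) \<le> card V" "card (set p) = length p"
      using card_mono[OF assms(1)] distinct_card by auto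
    then show ?thesis
      by simp
  qed
  then obtain p where "is_path V E p" "\<forall>q. is_path V E q \<longrightarrow> length q \<le> length p"
    using Lattices_Big.ex_has_greatest_nat[of "is_path V E" q length "Suc (card V)"] assms(2)
    by blast
  then show thesis
    using that assms(2) unfolding longest_path_def by blast
qed

lemma longest_path_start_nbr_in_set:
  assumes "simple_graph V E" "longest_path V E p" "E (p ! 0) y"
  shows "y \<in> set p"
proof (rule ccontr)
  assume "y \<notin> set p"
  moreover obtain a ps where p: "p = a # ps"
    using assms(2) unfolding longest_path_def is_path_def by (cases p) auto
  ultimately have "is_path V E (y # p)"
    using assms unfolding longest_path_def is_path_def simple_graph_def by auto
  then show False
    using assms(2) unfolding longest_path_def by fastforce
qed

lemma longest_path_start_nbr_index:
  assumes "simple_graph V E" "longest_path V E p" "E (p ! 0) y" "y \<noteq> p ! 1"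
  obtains m where "2 \<le> m" "m < length p" "y = p ! m"
proof -
  obtain m where m: "m < length p" "y = p ! m"
    using longest_path_start_nbr_in_set[OF assms(1-3)] by (metis in_set_conv_nth)
  have "m \<noteq> 0"
    using assms(1,3) m unfolding simple_graph_def by metis
  moreover have "m \<noteq> 1"
    using m assms(4) by auto
  ultimately have "2 \<le> m"
    by linarith
  then show thesis
    using that m by blast
qed

lemma longest_path_start_nbhd:
  assumes "simple_graph V E" "\<not> has_chorded_cycle V E" "longest_path V E p"
    and "E (p ! 0) y" "y \<noteq> p ! 1"
  shows "nbhd V E (p ! 0) \<subseteq> {p ! 1, y}"
proof
  fix z assume "z \<in> nbhd V E (p ! 0)"
  then have ez: "E (p ! 0) z"
    unfolding nbhd_def by simp
  show "z \<in> {p ! 1, y}"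
  proof (rule ccontr)
    assume "z \<notin> {p ! 1, y}"
    obtain i where i: "2 \<le> i" "i < length p" "y = p ! i"
      using longest_path_start_nbr_index[OF assms(1,3-5)] .
    obtain j where j: "2 \<le> j" "j < length p" "z = p ! j"
      using longest_path_start_nbr_index[OF assms(1,3) ez] \<open>z \<notin> {p ! 1, y}\<close> by blast
    have sym: "\<forall>u v. E u v \<longrightarrow> E v u" and path: "is_path V E p"
      using assms(1,3) unfolding simple_graph_def longest_path_def by auto
    from \<open>z \<notin> {p ! 1, y}\<close> i j consider "i < j" | "j < i"
      by (metis insert_iff linorder_neqE_nat)
    then show False
    proof cases
      case 1
      then show False
        using has_chorded_cycle_if_path_start_nbrs[OF sym path, of i j] assms(2,4) ez i j by simp
    next
      case 2
      then show False
        using has_chorded_cycle_if_path_start_nbrs[OF sym path, of j i] assms(2,4) ez i j by simp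
    qed
  qed
qed

lemma longest_path_rotate:
  assumes "simple_graph V E" "longest_path V E p" "E (p ! 0) (p ! m)" "m < length p"
  shows "longest_path V E (rev (take m p) @ drop m p)"
proof -
  have sym: "\<forall>u v. E u v \<longrightarrow> E v u" and "m \<noteq> 0"
    using assms(1,3) unfolding simple_graph_def by metis+
  have walk: "is_walk V E p" and "distinct p"
    using assms(2) unfolding longest_path_def is_path_def by auto
  have ne: "take m p \<noteq> []" "drop m p \<noteq> []"
    using \<open>m \<noteq> 0\<close> assms(4) by auto
  have "is_walk V E (take m p @ drop m p)"
    using walk by simp
  then have "is_walk V E (take m p)" "is_walk V E (drop m p)"
    using is_walk_append[OF ne] by auto
  moreover have "last (rev (take m p)) = p ! 0" "hd (drop m p) = p ! m"
    using ne assms(4) by (auto simp: last_rev hd_take hd_conv_nth hd_drop_conv_nth)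
  ultimately have "is_walk V E (rev (take m p) @ drop m p)"
    using is_walk_rev[OF sym] is_walk_append[of "rev (take m p)" "drop m p"] ne assms(3) by simp
  moreover have "distinct (rev (take m p) @ drop m p)"
    using \<open>distinct p\<close> by (simp add: set_take_disj_set_drop_if_distinct)
  ultimately show ?thesis
    using assms(2,4) unfolding longest_path_def is_path_def by simp
qed

lemma longest_path_rotation_nbhd:
  assumes "simple_graph V E" "\<not> has_chorded_cycle V E" "longest_path V E p"
    and "E (p ! 0) (p ! m)" "2 \<le> m" "m < length p"
  shows "nbhd V E (p ! (m - 1)) \<subseteq> {p ! (m - 2), p ! m}"
proof -
  define q where "q = rev (take m p) @ drop m p"
  have q: "longest_path V E q"
    using longest_path_rotate[OF assms(1,3,4,6)] q_def by simp
  have q0: "q ! 0 = p ! (m - 1)" and q1: "q ! 1 = p ! (m - 2)"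
    using assms(5,6) unfolding q_def by (simp_all add: nth_append rev_nth numeral_2_eq_2)
  have "E (p ! (m - 1)) (p ! m)"
    using is_walk_nth_edge[of V E p "m - 1"] assms(3,5,6)
    unfolding longest_path_def is_path_def by simp
  moreover have "p ! m \<noteq> p ! (m - 2)"
    using is_path_nth_eq_iff[of V E p m "m - 2"] assms(3,5,6) unfolding longest_path_def by simp
  ultimately show ?thesis
    using longest_path_start_nbhd[OF assms(1-2) q, of "p ! m"] q0 q1 by simp
qed

lemma two_connected_longest_path_start_nbr:
  assumes "simple_graph V E" "two_connected V E" "4 \<le> card V"
  obtains p m where "longest_path V E p" "2 \<le> m" "m < length p" "E (p ! 0) (p ! m)"
proof -
  obtain u where "u \<in> V"
    using card_ge_4_ex_outside[OF assms(3)] by blast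
  moreover obtain x where "x \<in> V" "x \<noteq> u"
    using card_ge_4_ex_outside[OF assms(3), of u u u] by blast
  ultimately obtain y where "y \<in> nbhd V E u" "y \<notin> {u, x}"
    using two_connected_nbhds_not_subset[OF assms(2,3), of x u u] by blast
  then have "is_path V E [u, y]"
    using \<open>u \<in> V\<close> unfolding is_path_def nbhd_def by auto
  moreover have "finite V"
    using assms(1) unfolding simple_graph_def by simp
  ultimately obtain p where p: "longest_path V E p" "length [u, y] \<le> length p"
    using longest_path_exists by blast
  have path: "is_path V E p"
    using p(1) unfolding longest_path_def by simp
  have "2 \<le> length p"
    using p(2) by simp
  then have len: "0 < length p" "1 < length p"
    by linarith+
  then have "p ! 0 \<noteq> p ! 1"
    using is_path_nth_eq_iff[OF path] by simp
  then obtain z where "E (p ! 0) z" "z \<noteq> p ! 1"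
    using two_connected_nbhds_not_subset[OF assms(2,3), of "p ! 1" "p ! 0" "p ! 0"]
      is_path_nth_mem[OF path len(1)] is_path_nth_mem[OF path len(2)]
    unfolding nbhd_def by blast
  then show thesis
    using longest_path_start_nbr_index[OF assms(1) p(1)] that p(1) by metis
qed

lemma two_connected_longest_path_far_start_nbr:
  assumes "simple_graph V E" "two_connected V E" "4 \<le> card V" "\<not> has_chorded_cycle V E"
  obtains p m where "longest_path V E p" "3 \<le> m" "m < length p" "E (p ! 0) (p ! m)"
proof -
  obtain p m where p: "longest_path V E p" and m: "2 \<le> m" "m < length p" "E (p ! 0) (p ! m)"
    using two_connected_longest_path_start_nbr[OF assms(1-3)] .
  have path: "is_path V E p"
    using p unfolding longest_path_def by simp
  note p_mem = is_path_nth_mem[OF path] and p_inj = is_path_nth_eq_iff[OF path]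
  have "m \<noteq> 2"
  proof
    assume "m = 2"
    have "nbhd V E (p ! 0) \<subseteq> {p ! 1, p ! 2}"
      using longest_path_start_nbhd[OF assms(1,4) p m(3)] p_inj[of m 1] m \<open>m = 2\<close> by simp
    moreover have "nbhd V E (p ! 1) \<subseteq> {p ! 0, p ! 2}"
      using longest_path_rotation_nbhd[OF assms(1,4) p m(3,1,2)] \<open>m = 2\<close> by simp
    ultimately show False
      using two_connected_nbhds_not_subset[OF assms(2,3), of "p ! 2" "p ! 1" "p ! 0"]
        p_mem[of 1] p_mem[of 2] p_inj[of 1 2] m \<open>m = 2\<close> by auto
  qed
  then have "3 \<le> m"
    using m(1) by linarith
  then show thesis
    using that p m(2,3) by blast
qed

lemma longest_path_far_start_nbr_delta2_le_3:
  assumes "simple_graph V E" "\<not> has_chorded_cycle V E" "longest_path V E p"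
    and "E (p ! 0) (p ! m)" "3 \<le> m" "m < length p" "delta2_ge V E k"
  shows "k \<le> 3"
proof -
  have path: "is_path V E p"
    using assms(3) unfolding longest_path_def by simp
  note p_mem = is_path_nth_mem[OF path] and p_inj = is_path_nth_eq_iff[OF path]
  have idx: "0 < length p" "1 < length p" "m - 1 < length p"
    using assms(5,6) by linarith+
  have N0: "nbhd V E (p ! 0) \<subseteq> {p ! 1, p ! m}"
    using longest_path_start_nbhd[OF assms(1-4)] p_inj[OF assms(6) idx(2)] assms(5) by simp
  have N1: "nbhd V E (p ! (m - 1)) \<subseteq> {p ! (m - 2), p ! m}"
    using longest_path_rotation_nbhd[OF assms(1-4)] assms(5,6) by simp
  have "p ! (m - 1) \<notin> {p ! 0, p ! 1, p ! m}"
    using p_inj[OF idx(3) idx(1)] p_inj[OF idx(3) idx(2)] p_inj[OF idx(3) assms(6)] assms(5)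
    by auto
  then have "p ! 0 \<noteq> p ! (m - 1)" "\<not> E (p ! 0) (p ! (m - 1))"
    using N0 p_mem[OF idx(3)] unfolding nbhd_def by auto
  then have "k \<le> card {p ! 1, p ! m, p ! (m - 2)}"
    by (rule delta2_ge_le_card[OF assms(7) p_mem[OF idx(1)] p_mem[OF idx(3)]])
      (use N0 N1 in auto)
  also have "\<dots> \<le> 3"
    by (simp add: card_insert_if)
  finally show ?thesis .
qed

theorem corollary2p8:
  fixes V :: "'a set" and E :: "'a \<Rightarrow> 'a \<Rightarrow> bool"
  assumes "simple_graph V E"
    and "two_connected V E"
    and "card V \<ge> 4"
    and "delta2_ge V E 4"
  shows "has_chorded_cycle V E"
proof (rule ccontr)
  assume acyclic: "\<not> has_chorded_cycle V E"
  obtain p m where "longest_path V E p" "3 \<le> m" "m < length p" "E (p ! 0) (p ! m)"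
    using two_connected_longest_path_far_start_nbr[OF assms(1-3) acyclic] .
  then have "4 \<le> (3::nat)"
    using longest_path_far_start_nbr_delta2_le_3[OF assms(1) acyclic _ _ _ _ assms(4)] by blast
  then show False
    by simp
qed

end
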